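(* Let $(V,\mathrm d)$ and $(V_h,\mathrm d_h)$ be the domain complexes of closed Hilbert complexes $(W,\mathrm d)$ and $(W_h,\mathrm d_h)$ respectively, with morphisms $i_h\colon V_h\to V$ and $\pi_h\colon V\to V_h$ such that $\pi_h^k\circ i_h^k=\mathrm{id}_{V_h^k}$ for each $k$. Let $c_P$ be a constant such that $\|v\|_V\le c_P\|\mathrm d^kv\|_V$ for all $v\in(\mathfrak Z^k)^{\perp}$. Then \[\|v_h\|_{V_h}\le c_P\,\|\pi_h^k\|\,\|i_h^{k+1}\|\,\|\mathrm d_hv_h\|_h\quad\text{for all } v_h\in(\mathfrak Z_h^k)^{\perp},\] where $\|\cdot\|_h$ is the norm of $W_h^{k+1}$.
   Context: A Hilbert complex $(W,\mathrm d)$ is a sequence of Hilbert spaces $W^k$ with closed densely defined linear maps $\mathrm d^k\colon V^k\subset W^k\to V^{k+1}\subset W^{k+1}$ satisfying $\mathrm d^k\circ\mathrm d^{k-1}=0$; it is closed if each $\mathrm d^kV^k$ is closed in $W^{k+1}$. Its domain complex $(V,\mathrm d)$ consists of the domains $V^k$ with the graph inner product $\langle u,v\rangle_V=\langle u,v\rangle_{W}+\langle\mathrm d u,\mathrm d v\rangle_{W}$, and is a bounded Hilbert complex. A morphism $f\colon V\to V'$ of domain complexes is a sequence of bounded linear maps $f^k\colon V^k\to V'^k$ with $\mathrm d'^kf^k=f^{k+1}\mathrm d^k$. $\mathfrak Z^k=\ker\mathrm d^k$ and $\mathfrak Z_h^k=\ker\mathrm d_h^k$, with orthogonal complements taken in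 $V^k$ and $V_h^k$ respectively. Operator norms $\|\pi_h^k\|$, $\|i_h^{k+1}\|$ are with respect to the $V$ and $V_h$ norms. *)

theory Defs
  imports "HOL-Analysis.Analysis"
begin

text \<open>A Hilbert complex is modelled by a family of closed subspaces W k of an ambient
real Hilbert space (type 'a), dense subspaces V k of W k (the domains) and maps
d k defined on V k with values in V (Suc k).\<close>

definition hilbert_complex ::
  "(nat \<Rightarrow> 'a::{real_inner,complete_space} set) \<Rightarrow> (nat \<Rightarrow> 'a set) \<Rightarrow> (nat \<Rightarrow> 'a \<Rightarrow> 'a) \<Rightarrow> bool" where
  "hilbert_complex W V d \<longleftrightarrow> (\<forall>k.
      subspace (W k) \<and> closed (W k) \<and>
      subspace (V k) \<and> V k \<subseteq> W k \<and> W k \<subseteq> closure (V k) \<and>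
      (\<forall>x\<in>V k. d k x \<in> V (Suc k)) \<and>
      (\<forall>x\<in>V k. \<forall>y\<in>V k. d k (x + y) = d k x + d k y) \<and>
      (\<forall>c. \<forall>x\<in>V k. d k (c *\<^sub>R x) = c *\<^sub>R d k x) \<and>
      closed {(x, d k x) | x. x \<in> V k} \<and>
      (\<forall>x\<in>V k. d (Suc k) (d k x) = 0))"

definition closed_hilbert_complex ::
  "(nat \<Rightarrow> 'a::{real_inner,complete_space} set) \<Rightarrow> (nat \<Rightarrow> 'a set) \<Rightarrow> (nat \<Rightarrow> 'a \<Rightarrow> 'a) \<Rightarrow> bool" where
  "closed_hilbert_complex W V d \<longleftrightarrow> hilbert_complex W V d \<and> (\<forall>k. closed (d k ` V k))"

definition V_inner :: "(nat \<Rightarrow> 'a::real_inner \<Rightarrow> 'a) \<Rightarrow> nat \<Rightarrow> 'a \<Rightarrow> 'a \<Rightarrow> real" where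
  "V_inner d k u v = inner u v + inner (d k u) (d k v)"

definition V_norm :: "(nat \<Rightarrow> 'a::real_inner \<Rightarrow> 'a) \<Rightarrow> nat \<Rightarrow> 'a \<Rightarrow> real" where
  "V_norm d k v = sqrt (V_inner d k v v)"

definition ker_d :: "(nat \<Rightarrow> 'a::real_inner set) \<Rightarrow> (nat \<Rightarrow> 'a \<Rightarrow> 'a) \<Rightarrow> nat \<Rightarrow> 'a set" where
  "ker_d V d k = {v \<in> V k. d k v = 0}"

definition V_perp :: "(nat \<Rightarrow> 'a::real_inner set) \<Rightarrow> (nat \<Rightarrow> 'a \<Rightarrow> 'a) \<Rightarrow> nat \<Rightarrow> 'a set \<Rightarrow> 'a set" where
  "V_perp V d k S = {v \<in> V k. \<forall>z\<in>S. V_inner d k v z = 0}"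

definition domain_morphism ::
  "(nat \<Rightarrow> 'a::real_inner set) \<Rightarrow> (nat \<Rightarrow> 'a \<Rightarrow> 'a) \<Rightarrow>
   (nat \<Rightarrow> 'b::real_inner set) \<Rightarrow> (nat \<Rightarrow> 'b \<Rightarrow> 'b) \<Rightarrow> (nat \<Rightarrow> 'a \<Rightarrow> 'b) \<Rightarrow> bool" where
  "domain_morphism V d V' d' f \<longleftrightarrow> (\<forall>k.
      (\<forall>x\<in>V k. f k x \<in> V' k) \<and>
      (\<forall>x\<in>V k. \<forall>y\<in>V k. f k (x + y) = f k x + f k y) \<and>
      (\<forall>c. \<forall>x\<in>V k. f k (c *\<^sub>R x) = c *\<^sub>R f k x) \<and>
      (\<exists>C. \<forall>x\<in>V k. V_norm d' k (f k x) \<le> C * V_norm d k x) \<and>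
      (\<forall>x\<in>V k. d' k (f k x) = f (Suc k) (d k x)))"

definition op_norm ::
  "(nat \<Rightarrow> 'a::real_inner set) \<Rightarrow> (nat \<Rightarrow> 'a \<Rightarrow> 'a) \<Rightarrow>
   (nat \<Rightarrow> 'b::real_inner \<Rightarrow> 'b) \<Rightarrow> (nat \<Rightarrow> 'a \<Rightarrow> 'b) \<Rightarrow> nat \<Rightarrow> real" where
  "op_norm V d d' f k = Inf {C. C \<ge> 0 \<and> (\<forall>x\<in>V k. V_norm d' k (f k x) \<le> C * V_norm d k x)}"

end

theory Submission
  imports Defs
begin

text \<open>Given \<open>v\<^sub>h \<perp> ker d\<^sub>h\<close>, lift \<open>d\<^sub>h v\<^sub>h\<close> into \<open>V\<close> by \<open>i\<^sub>h\<close> and take its preimage \<open>m\<close> under \<open>d\<close>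
of minimal graph norm; \<open>m\<close> exists because the graph of \<open>d\<close> is closed, and minimality makes
\<open>m \<perp> ker d\<close>, so the Poincar\'e inequality applies to \<open>m\<close>. Since \<open>\<pi>\<^sub>h\<close> and \<open>i\<^sub>h\<close> commute with
the differentials and \<open>\<pi>\<^sub>h \<circ> i\<^sub>h = id\<close>, \<open>d\<^sub>h (\<pi>\<^sub>h m) = d\<^sub>h v\<^sub>h\<close>; among all elements with this
differential \<open>v\<^sub>h\<close> has the least norm, being orthogonal to the kernel. Hence
\<open>\<parallel>v\<^sub>h\<parallel> \<le> \<parallel>\<pi>\<^sub>h m\<parallel> \<le> \<parallel>\<pi>\<^sub>h\<parallel> c\<^sub>P \<parallel>d m\<parallel> = \<parallel>\<pi>\<^sub>h\<parallel> c\<^sub>P \<parallel>i\<^sub>h d\<^sub>h v\<^sub>h\<parallel> \<le> c\<^sub>P \<parallel>\<pi>\<^sub>h\<parallel> \<parallel>i\<^sub>h\<parallel> \<parallel>d\<^sub>h v\<^sub>h\<parallel>\<close>.\<close>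

lemma exists_min_norm_closed_convex:
  fixes S :: "'a::{real_inner,complete_space} set"
  assumes "closed S" "convex S" "S \<noteq> {}"
  shows "\<exists>x\<in>S. \<forall>y\<in>S. norm x \<le> norm y"
proof -
  define \<delta> where "\<delta> = Inf (norm ` S)"
  have bdd: "bdd_below (norm ` S)"
    by (rule bdd_belowI[of _ 0]) auto
  have \<delta>_le: "\<delta> \<le> norm y" if "y \<in> S" for y
    unfolding \<delta>_def using bdd that by (simp add: cInf_lower)
  have "\<exists>x\<in>S. norm x < \<delta> + 1 / (real n + 1)" for n
    using cInf_lessD[of "norm ` S" "\<delta> + 1 / (real n + 1)"] assms(3) unfolding \<delta>_def by auto
  then obtain x where xS: "\<And>n. x n \<in> S" and x_less: "\<And>n. norm (x n) < \<delta> + 1 / (real n + 1)"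
    by metis
  have "(\<lambda>n. norm (x n)) \<longlonglongrightarrow> \<delta>"
  proof (rule tendsto_sandwich)
    show "\<forall>\<^sub>F n in sequentially. \<delta> \<le> norm (x n)" using \<delta>_le xS by simp
    show "\<forall>\<^sub>F n in sequentially. norm (x n) \<le> \<delta> + 1 / (real n + 1)"
      using x_less by (simp add: less_imp_le)
    show "(\<lambda>n. \<delta> + 1 / (real n + 1)) \<longlonglongrightarrow> \<delta>"
      using tendsto_add[OF tendsto_const LIMSEQ_inverse_real_of_nat_add[of 0]]
      by (simp add: inverse_eq_divide add.commute)
  qed simp
  then have excess_lim: "(\<lambda>n. (norm (x n))\<^sup>2 - \<delta>\<^sup>2) \<longlonglongrightarrow> 0"
    using tendsto_diff[OF tendsto_power[of _ _ _ 2] tendsto_const, of "\<lambda>n. norm (x n)" \<delta> sequentially "\<delta>\<^sup>2"]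
    by simp
  have dist_sq: "(dist (x m) (x n))\<^sup>2 \<le> 2 * ((norm (x m))\<^sup>2 - \<delta>\<^sup>2) + 2 * ((norm (x n))\<^sup>2 - \<delta>\<^sup>2)" for m n
  proof -
    have "(1/2) *\<^sub>R (x m + x n) \<in> S"
      using convexD[OF assms(2) xS xS, of "1/2" "1/2"] by (simp add: scaleR_right_distrib)
    then have "2 * \<delta> \<le> norm (x m + x n)"
      using \<delta>_le by fastforce
    moreover have "0 \<le> \<delta>"
      unfolding \<delta>_def using assms(3) by (auto intro: cInf_greatest)
    ultimately have "(2 * \<delta>)\<^sup>2 \<le> (norm (x m + x n))\<^sup>2"
      by (intro power_mono) auto
    moreover have "(norm (x m - x n))\<^sup>2 + (norm (x m + x n))\<^sup>2 = 2 * (norm (x m))\<^sup>2 + 2 * (norm (x n))\<^sup>2"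
      by (simp add: power2_norm_eq_inner inner_diff_left inner_diff_right inner_add_left
          inner_add_right inner_commute)
    ultimately show ?thesis
      by (simp add: dist_norm power_mult_distrib)
  qed
  have "Cauchy x"
  proof (rule metric_CauchyI)
    fix \<epsilon> :: real
    assume "0 < \<epsilon>"
    then have "\<forall>\<^sub>F n in sequentially. (norm (x n))\<^sup>2 - \<delta>\<^sup>2 < \<epsilon>\<^sup>2 / 4"
      using order_tendstoD(2)[OF excess_lim, of "\<epsilon>\<^sup>2 / 4"] by simp
    then obtain N where N: "\<And>n. n \<ge> N \<Longrightarrow> (norm (x n))\<^sup>2 - \<delta>\<^sup>2 < \<epsilon>\<^sup>2 / 4"
      unfolding eventually_sequentially by blast
    have "dist (x m) (x n) < \<epsilon>" if "m \<ge> N" "n \<ge> N" for m n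
    proof -
      have "(dist (x m) (x n))\<^sup>2 < \<epsilon>\<^sup>2"
        using dist_sq[of m n] N[OF that(1)] N[OF that(2)] by argo
      then show ?thesis
        using \<open>0 < \<epsilon>\<close> by (simp add: power_less_imp_less_base)
    qed
    then show "\<exists>M. \<forall>m\<ge>M. \<forall>n\<ge>M. dist (x m) (x n) < \<epsilon>"
      by blast
  qed
  then obtain l where l: "x \<longlonglongrightarrow> l"
    using Cauchy_convergent_iff convergent_def by blast
  have "l \<in> S"
    using closed_sequentially[OF assms(1)] xS l by blast
  moreover have "norm l = \<delta>"
    using LIMSEQ_unique[OF tendsto_norm[OF l] \<open>(\<lambda>n. norm (x n)) \<longlonglongrightarrow> \<delta>\<close>] .
  ultimately show ?thesis
    using \<delta>_le by auto
qed

lemma V_norm_eq_norm_Pair: "V_norm d k v = norm (v, d k v)"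
  unfolding V_norm_def V_inner_def by (simp add: norm_Pair power2_norm_eq_inner)

lemma V_norm_nonneg: "0 \<le> V_norm d k v"
  by (simp add: V_norm_eq_norm_Pair)

lemma norm_d_le_V_norm: "norm (d k v) \<le> V_norm d k v"
  by (simp add: V_norm_eq_norm_Pair norm_Pair real_le_rsqrt)

lemma V_norm_eq_norm_if_d_eq_0: "d k v = 0 \<Longrightarrow> V_norm d k v = norm v"
  by (simp add: V_norm_eq_norm_Pair norm_Pair)

lemma op_norm_nonneg_and_bound:
  assumes "domain_morphism V d V' d' f" and "x \<in> V k"
  shows op_norm_nonneg: "0 \<le> op_norm V d d' f k"
    and op_norm_bound: "V_norm d' k (f k x) \<le> op_norm V d d' f k * V_norm d k x"
proof -
  let ?S = "{C. C \<ge> 0 \<and> (\<forall>x\<in>V k. V_norm d' k (f k x) \<le> C * V_norm d k x)}"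
  obtain C where C: "\<forall>x\<in>V k. V_norm d' k (f k x) \<le> C * V_norm d k x"
    using assms(1) unfolding domain_morphism_def by blast
  have "C * V_norm d k x \<le> max C 0 * V_norm d k x" for x
    by (intro mult_right_mono) (auto simp: V_norm_nonneg)
  then have "max C 0 \<in> ?S"
    using C by (auto intro: order_trans)
  then have ne: "?S \<noteq> {}" by blast
  show "0 \<le> op_norm V d d' f k"
    unfolding op_norm_def using ne by (auto intro: cInf_greatest)
  show "V_norm d' k (f k x) \<le> op_norm V d d' f k * V_norm d k x"
  proof (cases "V_norm d k x = 0")
    case True
    then show ?thesis using \<open>max C 0 \<in> ?S\<close> assms(2) by auto
  next
    case False
    then have pos: "0 < V_norm d k x" using V_norm_nonneg[of d k x] by linarith
    have "V_norm d' k (f k x) / V_norm d k x \<le> op_norm V d d' f k"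
      unfolding op_norm_def
      by (rule cInf_greatest[OF ne]) (use assms(2) pos in \<open>auto simp: divide_le_eq\<close>)
    then show ?thesis using pos by (simp add: divide_le_eq)
  qed
qed

lemma domain_morphismD:
  assumes "domain_morphism V d V' d' f" "x \<in> V k"
  shows "f k x \<in> V' k" and "d' k (f k x) = f (Suc k) (d k x)"
  using assms unfolding domain_morphism_def by blast+

lemma hilbert_complex_lincomb:
  assumes "hilbert_complex W V d" "x \<in> V k" "y \<in> V k"
  shows "a *\<^sub>R x + b *\<^sub>R y \<in> V k"
    and "d k (a *\<^sub>R x + b *\<^sub>R y) = a *\<^sub>R d k x + b *\<^sub>R d k y"
proof -
  have V: "subspace (V k)" using assms(1) unfolding hilbert_complex_def by blast
  then show "a *\<^sub>R x + b *\<^sub>R y \<in> V k"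
    using assms(2,3) by (simp add: subspace_add subspace_scale)
  show "d k (a *\<^sub>R x + b *\<^sub>R y) = a *\<^sub>R d k x + b *\<^sub>R d k y"
    using assms V unfolding hilbert_complex_def by (simp add: subspace_scale)
qed

lemma V_perp_ker_norm_minimal:
  assumes "hilbert_complex W V d" "v \<in> V_perp V d k (ker_d V d k)"
    and "w \<in> V k" "d k w = d k v"
  shows "V_norm d k v \<le> V_norm d k w"
proof -
  have v: "v \<in> V k" using assms(2) unfolding V_perp_def by simp
  define z where "z = w - v"
  have "z \<in> ker_d V d k"
    using hilbert_complex_lincomb[OF assms(1) assms(3) v, of 1 "-1"] assms(4)
    unfolding ker_d_def z_def by simp
  then have "orthogonal (v, d k v) (z, d k z)"
    using assms(2) unfolding V_perp_def V_inner_def orthogonal_def by simp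
  moreover have "(v, d k v) + (z, d k z) = (w, d k w)"
    using \<open>z \<in> ker_d V d k\<close> assms(4) unfolding ker_d_def z_def by simp
  ultimately have "(norm (w, d k w))\<^sup>2 = (norm (v, d k v))\<^sup>2 + (norm (z, d k z))\<^sup>2"
    by (metis norm_add_Pythagorean)
  then have "(norm (v, d k v))\<^sup>2 \<le> (norm (w, d k w))\<^sup>2"
    by simp
  then show ?thesis
    unfolding V_norm_eq_norm_Pair by (simp add: power2_le_iff_abs_le)
qed

lemma exists_V_perp_ker_same_d:
  assumes "hilbert_complex W V d" "u \<in> V k"
  obtains m where "m \<in> V_perp V d k (ker_d V d k)" "d k m = d k u"
proof -
  define A where "A = {(v, d k v) | v. v \<in> V k \<and> d k v = d k u}"
  have "A = {(x, d k x) | x. x \<in> V k} \<inter> (UNIV \<times> {d k u})"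
    unfolding A_def by auto
  then have "closed A"
    using assms(1) unfolding hilbert_complex_def by (auto intro: closed_Int closed_Times)
  have "convex A"
  proof (rule convexI)
    fix x y and a b :: real
    assume "x \<in> A" "y \<in> A" "a + b = 1"
    then obtain v1 v2 where "x = (v1, d k v1)" "y = (v2, d k v2)" "v1 \<in> V k" "v2 \<in> V k"
      "d k v1 = d k u" "d k v2 = d k u"
      unfolding A_def by blast
    then show "a *\<^sub>R x + b *\<^sub>R y \<in> A"
      using hilbert_complex_lincomb[OF assms(1), of v1 k v2 a b] \<open>a + b = 1\<close>
      unfolding A_def by (auto simp flip: scaleR_add_left)
  qed
  have "A \<noteq> {}" using assms(2) unfolding A_def by blast
  then obtain p where "p \<in> A" and p_min: "\<forall>y\<in>A. dist 0 p \<le> dist 0 y"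
    using exists_min_norm_closed_convex[OF \<open>closed A\<close> \<open>convex A\<close>] by (auto simp: dist_0_norm)
  then obtain m where p: "p = (m, d k m)" and m: "m \<in> V k" "d k m = d k u"
    unfolding A_def by blast
  have "V_inner d k m z = 0" if z: "z \<in> ker_d V d k" for z
  proof -
    have "- (t * inner m z) \<le> 0" for t
    proof -
      have "m + t *\<^sub>R z \<in> V k" "d k (m + t *\<^sub>R z) = d k m"
        using hilbert_complex_lincomb[OF assms(1) m(1), of z 1 t] z unfolding ker_d_def by auto
      then have "p + t *\<^sub>R (z, 0) \<in> A"
        using p m unfolding A_def by auto
      from any_closest_point_dot[OF \<open>convex A\<close> \<open>closed A\<close> \<open>p \<in> A\<close> this p_min]
      show ?thesis by (simp add: p)
    qed
    from this[of 1] this[of "-1"] have "inner m z = 0" by simp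
    then show ?thesis
      using z unfolding ker_d_def V_inner_def by simp
  qed
  then show ?thesis
    using that m unfolding V_perp_def by blast
qed

lemma real_le_chain_mult:
  fixes a b x y c P I :: real
  assumes "0 \<le> P" "0 \<le> I" "0 \<le> b" "0 \<le> x"
    and "a \<le> P * b" "b \<le> c * x" "x \<le> I * y" "y \<le> a"
  shows "a \<le> c * P * I * y"
proof (cases "0 \<le> c")
  case True
  have "a \<le> P * (c * x)" using assms(1,5,6) by (meson mult_left_mono order_trans)
  also have "\<dots> \<le> P * (c * (I * y))" using True assms(1,7) by (simp add: mult_left_mono)
  finally show ?thesis by (simp add: mult_ac)
next
  case False
  then have "c * x \<le> 0" using assms(4) by (simp add: mult_nonpos_nonneg)
  then have "b = 0" using assms(3,6) by linarith
  then have "a \<le> 0" using assms(5) by simp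
  moreover have "c * P * I \<le> 0" using False assms(1,2) by (simp add: mult_nonpos_nonneg)
  ultimately have "0 \<le> c * P * I * y" using assms(8) by (simp add: mult_nonpos_nonpos)
  then show ?thesis using \<open>a \<le> 0\<close> by linarith
qed

theorem mainTheorem5:
  fixes W V :: "nat \<Rightarrow> 'a::{real_inner,complete_space} set"
    and d :: "nat \<Rightarrow> 'a \<Rightarrow> 'a"
    and Wh Vh :: "nat \<Rightarrow> 'b::{real_inner,complete_space} set"
    and dh :: "nat \<Rightarrow> 'b \<Rightarrow> 'b"
    and ih :: "nat \<Rightarrow> 'b \<Rightarrow> 'a"
    and \<pi>h :: "nat \<Rightarrow> 'a \<Rightarrow> 'b"
    and k :: nat and cP :: real
  assumes "closed_hilbert_complex W V d"
    and "closed_hilbert_complex Wh Vh dh"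
    and "domain_morphism Vh dh V d ih"
    and "domain_morphism V d Vh dh \<pi>h"
    and "\<forall>j. \<forall>x\<in>Vh j. \<pi>h j (ih j x) = x"
    and "\<forall>v\<in>V_perp V d k (ker_d V d k). V_norm d k v \<le> cP * V_norm d (Suc k) (d k v)"
  shows "\<forall>vh\<in>V_perp Vh dh k (ker_d Vh dh k).
           V_norm dh k vh \<le> cP * op_norm V d dh \<pi>h k * op_norm Vh dh d ih (Suc k) * norm (dh k vh)"
proof
  fix vh assume vh: "vh \<in> V_perp Vh dh k (ker_d Vh dh k)"
  have HC: "hilbert_complex W V d" and HCh: "hilbert_complex Wh Vh dh"
    using assms(1,2) unfolding closed_hilbert_complex_def by blast+
  have "vh \<in> Vh k" using vh unfolding V_perp_def by blast
  define y where "y = dh k vh"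
  have y: "y \<in> Vh (Suc k)" "dh (Suc k) y = 0"
    using HCh \<open>vh \<in> Vh k\<close> unfolding y_def hilbert_complex_def by blast+
  obtain m where m: "m \<in> V_perp V d k (ker_d V d k)" "d k m = d k (ih k vh)"
    using exists_V_perp_ker_same_d[OF HC domain_morphismD(1)[OF assms(3) \<open>vh \<in> Vh k\<close>]] .
  have "m \<in> V k" using m(1) unfolding V_perp_def by blast
  have dm: "d k m = ih (Suc k) y"
    using m(2) domain_morphismD(2)[OF assms(3) \<open>vh \<in> Vh k\<close>] unfolding y_def by simp
  have "dh k (\<pi>h k m) = dh k vh"
    using domain_morphismD(2)[OF assms(4) \<open>m \<in> V k\<close>] dm assms(5) y(1) unfolding y_def by simp
  then have "V_norm dh k vh \<le> V_norm dh k (\<pi>h k m)"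
    using V_perp_ker_norm_minimal[OF HCh vh domain_morphismD(1)[OF assms(4) \<open>m \<in> V k\<close>]] by simp
  also have "\<dots> \<le> op_norm V d dh \<pi>h k * V_norm d k m"
    using op_norm_bound[OF assms(4) \<open>m \<in> V k\<close>] .
  finally have vh_le: "V_norm dh k vh \<le> op_norm V d dh \<pi>h k * V_norm d k m" .
  have m_le: "V_norm d k m \<le> cP * V_norm d (Suc k) (ih (Suc k) y)"
    using bspec[OF assms(6) m(1)] unfolding dm .
  have ih_le: "V_norm d (Suc k) (ih (Suc k) y) \<le> op_norm Vh dh d ih (Suc k) * norm y"
    using op_norm_bound[OF assms(3) y(1)] V_norm_eq_norm_if_d_eq_0[of dh, OF y(2)] by simp
  have "norm y \<le> V_norm dh k vh"
    unfolding y_def by (rule norm_d_le_V_norm)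
  from real_le_chain_mult[OF op_norm_nonneg[OF assms(4) \<open>m \<in> V k\<close>] op_norm_nonneg[OF assms(3) y(1)]
      V_norm_nonneg V_norm_nonneg vh_le m_le ih_le this]
  show "V_norm dh k vh \<le> cP * op_norm V d dh \<pi>h k * op_norm Vh dh d ih (Suc k) * norm (dh k vh)"
    unfolding y_def .
qed

end
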